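(* \[ \sum_{n=1}^\infty\frac{a_n^2\,H_n^{(3)}}{2n-1}=\frac{2}{\pi}\Big(16G+4\pi-8\pi\log2-\zeta(3)-8\Big). \]
   Context: $a_n=\frac{1}{4^n}\binom{2n}{n}$; $H_n^{(3)}=\sum_{k=1}^n\frac{1}{k^3}$; $G=\sum_{k\ge0}\frac{(-1)^k}{(2k+1)^2}$ is Catalan's constant; $\zeta(3)=\sum_{k\ge1}k^{-3}$. *)

theory Defs
  imports "HOL-Analysis.Analysis"
begin

definition central_binom_norm :: "nat \<Rightarrow> real" where
  "central_binom_norm n = real ((2*n) choose n) / 4 ^ n"

definition harm3 :: "nat \<Rightarrow> real" where
  "harm3 n = (\<Sum>k=1..n. 1 / real k ^ 3)"

definition catalan_G :: real where
  "catalan_G = (\<Sum>k. (-1) ^ k / (2 * real k + 1) ^ 2)"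

definition zeta3 :: real where
  "zeta3 = (\<Sum>k. 1 / real (Suc k) ^ 3)"

end

theory Submission
  imports Defs "HOL-Real_Asymp.Real_Asymp"
begin

(* Let c_k = (2k+1) a_k^2 (wallis_seq).  Then a_n^2/(2n-1) = c_(n-1) - c_n, and c_k -> 2/pi by
   Wallis' product.  Summation by parts therefore turns the series into
   sum_k c_k/(k+1)^3 - lim c_N H_N^(3), where c_k/(k+1)^3 = 8 a_(k+1)^2/(2k+1) - 4 a_(k+1)^2/(k+1);
   the first part telescopes to 1 - 2/pi.

   For the second part, a_n = (2/pi) int_0^(pi/2) sin^(2n) t dt.  Integrating the binomial series
   sum_n a_n x^n = (1-x)^(-1/2) gives sum_n a_n x^n/n = 2 log 2 - 2 log (1 + sqrt (1-x)), hence
   sum_n a_n^2/n = (2/pi) int_0^(pi/2) (2 log 2 - 2 log (1 + cos t)) dt = (16/pi) int_0^(pi/4) - log cos.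
   The substitution x = tan v turns int_0^(pi/4) - log tan into int_0^1 - log x/(1+x^2) = G, and the
   duplication formula for sin then yields int_0^(pi/4) - log cos = pi/4 log 2 - G/2.  All termwise
   integrations are justified by monotone convergence, the terms being nonnegative. *)

lemma central_binom_norm_0 [simp]: "central_binom_norm 0 = 1"
  by (simp add: central_binom_norm_def)

lemma central_binom_norm_pos: "0 < central_binom_norm n"
  by (simp add: central_binom_norm_def)

lemma central_binom_norm_Suc:
  "central_binom_norm (Suc n) = central_binom_norm n * (2 * real n + 1) / (2 * real n + 2)"
proof -
  have "real ((2 * Suc n) choose Suc n) = fact (2 * Suc n) / (fact (Suc n) * fact (Suc n))"
    using binomial_fact[of "Suc n" "2 * Suc n"] by simp
  also have "\<dots> = 2 * (2 * real n + 1) / (real n + 1) * (fact (2 * n) / (fact n * fact n))"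
    by (simp add: divide_simps; simp add: algebra_simps)
  also have "fact (2 * n) / (fact n * fact n) = real ((2 * n) choose n)"
    using binomial_fact[of n "2 * n", where 'a=real] by simp
  finally have rec:
    "real ((2 * Suc n) choose Suc n) = 2 * (2 * real n + 1) / (real n + 1) * real ((2 * n) choose n)" .
  show ?thesis
    unfolding central_binom_norm_def rec by (simp add: divide_simps; simp add: algebra_simps)
qed

definition wallis_seq :: "nat \<Rightarrow> real" where
  "wallis_seq k = (2 * real k + 1) * central_binom_norm k ^ 2"

lemma wallis_seq_0 [simp]: "wallis_seq 0 = 1"
  by (simp add: wallis_seq_def)

lemma wallis_seq_diff:
  "wallis_seq k - wallis_seq (Suc k) = central_binom_norm (Suc k) ^ 2 / (2 * real (Suc k) - 1)"
proof -
  have "2 * real k + 2 \<noteq> 0" "2 * real k + 1 \<noteq> 0" by linarith+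
  then show ?thesis unfolding wallis_seq_def central_binom_norm_Suc
    by (simp add: divide_simps power2_eq_square; simp add: algebra_simps)
qed

lemma wallis_seq_Suc:
  "wallis_seq (Suc k) = wallis_seq k * ((2 * real k + 1) * (2 * real k + 3) / (2 * real k + 2) ^ 2)"
proof -
  have "2 * real k + 1 \<noteq> 0" "2 * real k + 2 \<noteq> 0" by linarith+
  then show ?thesis
    unfolding wallis_seq_def central_binom_norm_Suc
    by (simp add: divide_simps power2_eq_square; simp add: algebra_simps)
qed

lemma wallis_seq_mult_prod:
  "wallis_seq k * (\<Prod>j=1..k. 4 * real j ^ 2 / (4 * real j ^ 2 - 1)) = 1"
proof (induction k)
  case 0
  then show ?case by simp
next
  case (Suc k)
  let ?F = "\<lambda>j. 4 * real j ^ 2 / (4 * real j ^ 2 - 1)"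
  have "?F (Suc k) = (2 * real k + 2) ^ 2 / ((2 * real k + 1) * (2 * real k + 3))"
    by (simp add: algebra_simps power2_eq_square)
  moreover have "(2 * real k + 1) * (2 * real k + 3) \<noteq> 0" "(2 * real k + 2) ^ 2 \<noteq> 0"
    by (simp_all add: add_pos_pos)
  ultimately have step: "wallis_seq (Suc k) * ?F (Suc k) = wallis_seq k"
    unfolding wallis_seq_Suc by simp
  have "(\<Prod>j=1..Suc k. ?F j) = ?F (Suc k) * (\<Prod>j=1..k. ?F j)"
    by (rule prod.nat_ivl_Suc') simp
  then have "wallis_seq (Suc k) * (\<Prod>j=1..Suc k. ?F j) = wallis_seq k * (\<Prod>j=1..k. ?F j)"
    unfolding step[symmetric] by (simp only: mult.assoc)
  also have "\<dots> = 1"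
    by (rule Suc.IH)
  finally show ?case .
qed

lemma wallis_seq_LIMSEQ: "wallis_seq \<longlonglongrightarrow> 2 / pi"
proof -
  have "wallis_seq = (\<lambda>k. inverse (\<Prod>j=1..k. 4 * real j ^ 2 / (4 * real j ^ 2 - 1)))"
  proof
    show "wallis_seq k = inverse (\<Prod>j=1..k. 4 * real j ^ 2 / (4 * real j ^ 2 - 1))" for k
      using wallis_seq_mult_prod[of k] by (simp add: inverse_unique mult.commute)
  qed
  also have "\<dots> \<longlonglongrightarrow> inverse (pi / 2)"
    by (rule tendsto_inverse[OF wallis]) simp
  finally show ?thesis by simp
qed

lemma sum_central_binom_norm_sq_div_odd:
  "(\<Sum>n<N. central_binom_norm (Suc n) ^ 2 / (2 * real (Suc n) - 1)) = 1 - wallis_seq N"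
proof (induction N)
  case (Suc N)
  then show ?case using wallis_seq_diff[of N] by simp
qed simp

lemma central_binom_norm_sq_div_odd_sums:
  "(\<lambda>n. central_binom_norm (Suc n) ^ 2 / (2 * real (Suc n) - 1)) sums (1 - 2 / pi)"
  unfolding sums_def sum_central_binom_norm_sq_div_odd by (intro tendsto_intros wallis_seq_LIMSEQ)

lemma harm3_Suc: "harm3 (Suc n) = harm3 n + 1 / real (Suc n) ^ 3"
  unfolding harm3_def by simp

lemma sum_central_binom_norm_sq_harm3:
  "(\<Sum>n<N. central_binom_norm (Suc n) ^ 2 * harm3 (Suc n) / (2 * real (Suc n) - 1))
     = (\<Sum>k<N. wallis_seq k / real (Suc k) ^ 3) - wallis_seq N * harm3 N"
proof (induction N)
  case 0
  then show ?case by (simp add: harm3_def)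
next
  case (Suc N)
  have "(\<Sum>n<Suc N. central_binom_norm (Suc n) ^ 2 * harm3 (Suc n) / (2 * real (Suc n) - 1))
     = (\<Sum>k<N. wallis_seq k / real (Suc k) ^ 3) - wallis_seq N * harm3 N
       + harm3 (Suc N) * (wallis_seq N - wallis_seq (Suc N))"
    using Suc.IH wallis_seq_diff[of N] by simp
  also have "\<dots> = (\<Sum>k<Suc N. wallis_seq k / real (Suc k) ^ 3) - wallis_seq (Suc N) * harm3 (Suc N)"
    unfolding harm3_Suc by (simp add: algebra_simps diff_divide_distrib)
  finally show ?case .
qed

lemma wallis_seq_div_cube:
  "wallis_seq k / real (Suc k) ^ 3
     = 8 * (central_binom_norm (Suc k) ^ 2 / (2 * real (Suc k) - 1))
       - 4 * (central_binom_norm (Suc k) ^ 2 / real (Suc k))"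
proof -
  have "2 * real k + 2 \<noteq> 0" "2 * real k + 1 \<noteq> 0" "real k + 1 \<noteq> 0" by linarith+
  then show ?thesis unfolding wallis_seq_def central_binom_norm_Suc
    by (simp add: divide_simps power2_eq_square power3_eq_cube; simp add: algebra_simps)
qed

lemma harm3_LIMSEQ: "harm3 \<longlonglongrightarrow> zeta3"
proof -
  have "summable (\<lambda>k. 1 / real (Suc k) ^ 3)"
    using summable_Suc_iff[of "\<lambda>k. 1 / real k ^ 3"] inverse_power_summable[of 3, where 'a=real]
    by (simp add: divide_inverse)
  then have "(\<lambda>N. \<Sum>k<N. 1 / real (Suc k) ^ 3) \<longlonglongrightarrow> zeta3"
    unfolding zeta3_def by (rule summable_LIMSEQ)
  moreover have "(\<Sum>k<N. 1 / real (Suc k) ^ 3) = harm3 N" for N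
    unfolding harm3_def by (induction N) auto
  ultimately show ?thesis by simp
qed

lemma has_integral_suminf_nonneg:
  fixes f :: "nat \<Rightarrow> 'n::euclidean_space \<Rightarrow> real"
  assumes nonneg: "\<And>k x. x \<in> S \<Longrightarrow> 0 \<le> f k x"
    and int: "\<And>k. (f k has_integral I k) S"
    and sums: "\<And>x. x \<in> S \<Longrightarrow> (\<lambda>k. f k x) sums g x"
    and "summable I"
  shows "(g has_integral suminf I) S"
proof -
  have int_partial: "((\<lambda>x. \<Sum>k<n. f k x) has_integral (\<Sum>k<n. I k)) S" for n
    by (intro has_integral_sum int) simp
  then have integral_partial: "integral S (\<lambda>x. \<Sum>k<n. f k x) = (\<Sum>k<n. I k)" for n
    by (rule integral_unique)
  have "g integrable_on S \<and> (\<lambda>n. integral S (\<lambda>x. \<Sum>k<n. f k x)) \<longlonglongrightarrow> integral S g"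
  proof (rule monotone_convergence_increasing)
    show "(\<lambda>x. \<Sum>k<n. f k x) integrable_on S" for n
      using int_partial by blast
    show "(\<Sum>k<n. f k x) \<le> (\<Sum>k<Suc n. f k x)" if "x \<in> S" for n x
      using nonneg[OF that] by simp
    show "(\<lambda>n. \<Sum>k<n. f k x) \<longlonglongrightarrow> g x" if "x \<in> S" for x
      using sums[OF that] by (simp add: sums_def)
    have "(\<lambda>n. integral S (\<lambda>x. \<Sum>k<n. f k x)) \<longlonglongrightarrow> suminf I"
      unfolding integral_partial by (rule summable_LIMSEQ[OF \<open>summable I\<close>])
    then show "bounded (range (\<lambda>n. integral S (\<lambda>x. \<Sum>k<n. f k x)))"
      by (rule convergent_imp_bounded)
  qed
  with summable_LIMSEQ[OF \<open>summable I\<close>] show ?thesis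
    unfolding integral_partial by (metis LIMSEQ_unique has_integral_integrable_integral)
qed

lemma has_integral_sums_nonneg:
  fixes f :: "nat \<Rightarrow> 'n::euclidean_space \<Rightarrow> real"
  assumes nonneg: "\<And>k x. x \<in> S \<Longrightarrow> 0 \<le> f k x"
    and int: "\<And>k. (f k has_integral I k) S"
    and sums: "\<And>x. x \<in> S \<Longrightarrow> (\<lambda>k. f k x) sums g x"
    and g: "(g has_integral J) S"
  shows "I sums J"
proof -
  have "summable I"
  proof (rule bounded_imp_summable)
    show "0 \<le> I k" for k
      using int nonneg by (rule has_integral_nonneg)
    show "(\<Sum>k\<le>n. I k) \<le> J" for n
    proof (rule has_integral_le[OF _ g])
      show "((\<lambda>x. \<Sum>k\<le>n. f k x) has_integral (\<Sum>k\<le>n. I k)) S"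
        by (intro has_integral_sum int) simp
      show "(\<Sum>k\<le>n. f k x) \<le> g x" if "x \<in> S" for x
        using sums[OF that] nonneg[OF that] by (metis sums_iff sum_le_suminf finite_atMost)
    qed
  qed
  with has_integral_suminf_nonneg[OF nonneg int sums] g have "suminf I = J"
    using has_integral_unique by blast
  with \<open>summable I\<close> show ?thesis
    using summable_sums by blast
qed

lemma central_binom_norm_eq_gbinomial:
  "central_binom_norm k = (-1) ^ k * ((-1/2 :: real) gchoose k)"
proof (induction k)
  case 0
  then show ?case by simp
next
  case (Suc k)
  have "(-1/2 :: real) * ((-1/2) gchoose k) = real k * ((-1/2) gchoose k) + real (Suc k) * ((-1/2) gchoose Suc k)"
    by (rule gbinomial_mult_1)
  then have rec: "((-1/2 :: real) gchoose Suc k) = (-1/2 - real k) * ((-1/2) gchoose k) / real (Suc k)"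
    by (simp add: field_simps del: of_nat_Suc)
  show ?case
    unfolding central_binom_norm_Suc Suc.IH rec by (simp add: field_simps)
qed

lemma central_binom_norm_sums:
  assumes "\<bar>z\<bar> < 1"
  shows "(\<lambda>k. central_binom_norm k * z ^ k) sums (1 - z) powr (-1/2)"
proof -
  have "(\<lambda>k. ((-1/2 :: real) gchoose k) * (-z) ^ k) sums (1 + - z) powr (-1/2)"
    by (rule gen_binomial_real) (use assms in simp)
  then show ?thesis
    by (simp add: central_binom_norm_eq_gbinomial power_minus' algebra_simps)
qed

lemma central_binom_norm_Suc_sums:
  assumes "\<bar>z\<bar> < 1"
  shows "(\<lambda>k. central_binom_norm (Suc k) * z ^ k) sums (1 / (sqrt (1 - z) * (1 + sqrt (1 - z))))"
proof (cases "z = 0")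
  case True
  have "(\<lambda>k. central_binom_norm (Suc k) * 0 ^ k) sums (central_binom_norm 1)"
    using powser_sums_zero[of "\<lambda>k. central_binom_norm (Suc k)"] by simp
  with True show ?thesis
    by (simp add: central_binom_norm_Suc)
next
  case False
  define r where "r = sqrt (1 - z)"
  have "r > 0" "r\<^sup>2 = 1 - z"
    using assms by (simp_all add: r_def)
  have "(1 - z) powr (-1/2) = 1 / r"
    using assms by (simp add: r_def powr_minus_divide powr_half_sqrt)
  with central_binom_norm_sums[OF assms] have "(\<lambda>k. central_binom_norm (Suc k) * z ^ Suc k) sums (1 / r - 1)"
    by (subst sums_Suc_iff) simp
  then have "(\<lambda>k. central_binom_norm (Suc k) * z ^ Suc k / z) sums ((1 / r - 1) / z)"
    by (rule sums_divide)
  moreover have "(1 / r - 1) / z = 1 / (r * (1 + r))"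
  proof -
    have z: "z = (1 - r) * (1 + r)"
      using \<open>r\<^sup>2 = 1 - z\<close> by (simp add: algebra_simps power2_eq_square)
    with False \<open>r > 0\<close> have "1 - r \<noteq> 0" "1 + r \<noteq> 0"
      by auto
    moreover have "1 / r - 1 = (1 - r) / r"
      using \<open>r > 0\<close> by (simp add: field_simps)
    ultimately show ?thesis
      unfolding z by simp
  qed
  ultimately show ?thesis
    using False by (simp add: r_def)
qed

lemma has_integral_power_01: "((\<lambda>u. u ^ k) has_integral (1 / real (Suc k))) {0..1::real}"
proof -
  have "((\<lambda>u. u ^ Suc k / real (Suc k)) has_real_derivative u ^ k) (at u within {0..1})" for u :: real
    using DERIV_cdivide[OF DERIV_pow[of "Suc k" u], of "real (Suc k)"] by simp
  then have "((\<lambda>u. u ^ k) has_integral (1 ^ Suc k / real (Suc k) - 0 ^ Suc k / real (Suc k))) {0..1::real}"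
    by (intro fundamental_theorem_of_calculus) (auto simp: has_real_derivative_iff_has_vector_derivative[symmetric])
  then show ?thesis by simp
qed

lemma central_binom_norm_power_div_sums:
  assumes "0 \<le> s" "s < 1"
  shows "(\<lambda>k. central_binom_norm (Suc k) * s ^ Suc k / real (Suc k))
           sums (2 * ln 2 - 2 * ln (1 + sqrt (1 - s)))"
proof (rule has_integral_sums_nonneg)
  have pos: "0 < 1 - s * u" if "u \<in> {0..1}" for u
    using assms that mult_left_le[of u s] by auto
  show "0 \<le> s * (central_binom_norm (Suc k) * (s * u) ^ k)" if "u \<in> {0..1}" for k u
    using assms that central_binom_norm_pos[of "Suc k"] by simp
  show "((\<lambda>u. s * (central_binom_norm (Suc k) * (s * u) ^ k)) has_integral
          central_binom_norm (Suc k) * s ^ Suc k / real (Suc k)) {0..1}" for k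
    using has_integral_mult_right[OF has_integral_power_01[of k], of "central_binom_norm (Suc k) * s ^ Suc k"]
    by (simp add: power_mult_distrib mult_ac)
  show "(\<lambda>k. s * (central_binom_norm (Suc k) * (s * u) ^ k)) sums
          (s * (1 / (sqrt (1 - s * u) * (1 + sqrt (1 - s * u)))))" if "u \<in> {0..1}" for u
    using pos[OF that] assms that
    by (intro sums_mult central_binom_norm_Suc_sums) (simp add: abs_mult mult_le_one)
  let ?G = "\<lambda>u. - 2 * ln (1 + sqrt (1 - s * u))"
  have "(?G has_real_derivative s * (1 / (sqrt (1 - s * u) * (1 + sqrt (1 - s * u))))) (at u within {0..1})"
    if "u \<in> {0..1}" for u
  proof -
    have "0 < sqrt (1 - s * u)"
      using pos[OF that] by simp
    then have "(?G has_real_derivative - 2 * ((inverse (sqrt (1 - s * u)) / 2 * (- s)) / (1 + sqrt (1 - s * u))))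
        (at u within {0..1})"
      using pos[OF that] by (auto intro!: derivative_eq_intros simp: add_pos_pos mult_ac)
    then show ?thesis
      using \<open>0 < sqrt (1 - s * u)\<close> by (simp add: divide_simps)
  qed
  then have "((\<lambda>u. s * (1 / (sqrt (1 - s * u) * (1 + sqrt (1 - s * u))))) has_integral (?G 1 - ?G 0)) {0..1}"
    by (intro fundamental_theorem_of_calculus) (auto simp: has_real_derivative_iff_has_vector_derivative[symmetric])
  then show "((\<lambda>u. s * (1 / (sqrt (1 - s * u) * (1 + sqrt (1 - s * u))))) has_integral
               2 * ln 2 - 2 * ln (1 + sqrt (1 - s))) {0..1}"
    by simp
qed

lemma has_integral_sin_power_even:
  "((\<lambda>t. sin t ^ (2 * k)) has_integral (pi / 2 * central_binom_norm k)) {0..pi/2}"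
proof (induction k)
  case 0
  then show ?case
    using has_integral_const_real[of "1::real" 0 "pi/2"] by simp
next
  case (Suc k)
  let ?F = "\<lambda>t. - (sin t ^ Suc (2 * k) * cos t)"
  let ?f = "\<lambda>t. (2 * real k + 2) * sin t ^ Suc (Suc (2 * k)) - (2 * real k + 1) * sin t ^ (2 * k)"
  have "(?F has_real_derivative ?f t) (at t within {0..pi/2})" for t
  proof -
    have "(?F has_real_derivative
        - ((1 + real (2 * k)) * (cos t * sin t ^ (2 * k)) * cos t + - sin t * sin t ^ Suc (2 * k)))
        (at t within {0..pi/2})"
      by (intro DERIV_minus DERIV_mult DERIV_power_Suc
          DERIV_sin[THEN has_field_derivative_at_within] DERIV_cos[THEN has_field_derivative_at_within])
    moreover have "- ((1 + real (2 * k)) * (cos t * sin t ^ (2 * k)) * cos t + - sin t * sin t ^ Suc (2 * k)) = ?f t"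
    proof -
      define S where "S = sin t ^ (2 * k)"
      have "- ((1 + 2 * real k) * (cos t * S) * cos t + - sin t * (sin t * S))
          = (2 * real k + 2) * (sin t * (sin t * S)) - (2 * real k + 1) * S"
        using sin_cos_squared_add[of t] by algebra
      then show ?thesis
        by (simp only: S_def power_Suc of_nat_mult of_nat_numeral)
    qed
    ultimately show ?thesis
      by simp
  qed
  then have "(?f has_integral (?F (pi/2) - ?F 0)) {0..pi/2}"
    by (intro fundamental_theorem_of_calculus) (auto simp: has_real_derivative_iff_has_vector_derivative[symmetric])
  then have "(?f has_integral 0) {0..pi/2}"
    by simp
  from has_integral_add[OF this has_integral_mult_right[OF Suc.IH, of "2 * real k + 1"]]
  have "((\<lambda>t. (2 * real k + 2) * sin t ^ (2 * k + 2)) has_integral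
      (2 * real k + 1) * (pi / 2 * central_binom_norm k)) {0..pi/2}"
    by simp
  from has_integral_mult_right[OF this, of "1 / (2 * real k + 2)"]
  show ?case
    by (simp add: central_binom_norm_Suc mult_ac)
qed

lemma continuous_on_power_Suc_mult_ln: "continuous_on {0..1} (\<lambda>x::real. x ^ Suc m * ln x)"
proof -
  have "((\<lambda>x::real. x ^ m * (x * ln x)) \<longlongrightarrow> 0 ^ m * 0) (at_right 0)"
    by (intro tendsto_intros) real_asymp
  then have "((\<lambda>x::real. x ^ Suc m * ln x) \<longlongrightarrow> 0) (at 0 within {0..1})"
    by (simp add: at_within_Icc_at_right mult_ac)
  then have "continuous (at x within {0..1}) (\<lambda>x::real. x ^ Suc m * ln x)" if "x \<in> {0..1}" for x
  proof (cases "x = 0")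
    case False
    with that have "isCont (\<lambda>x::real. x ^ Suc m * ln x) x"
      by (intro continuous_intros) auto
    then show ?thesis
      by (rule continuous_at_imp_continuous_at_within)
  qed (simp add: continuous_within)
  then show ?thesis
    using continuous_on_eq_continuous_within by blast
qed

lemma has_integral_power_mult_neg_ln:
  "((\<lambda>x::real. x ^ m * (- ln x)) has_integral (1 / real (Suc m) ^ 2)) {0..1}"
proof -
  define F where "F x = x ^ Suc m / real (Suc m) ^ 2 - x ^ Suc m * ln x / real (Suc m)" for x :: real
  have "continuous_on {0..1} F"
    unfolding F_def by (intro continuous_intros continuous_on_power_Suc_mult_ln) auto
  moreover have "(F has_real_derivative x ^ m * (- ln x)) (at x)" if "x \<in> {0<..<1}" for x
  proof -
    from that have "x > 0" by simp
    have "(F has_real_derivative real (Suc m) * x ^ m / real (Suc m) ^ 2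
        - (real (Suc m) * x ^ m * ln x + inverse x * x ^ Suc m) / real (Suc m)) (at x)"
      unfolding F_def using DERIV_pow[of "Suc m" x UNIV] DERIV_ln[OF \<open>x > 0\<close>]
      by (intro DERIV_diff DERIV_cdivide DERIV_mult) simp_all
    moreover have "inverse x * x ^ Suc m = x ^ m"
      using \<open>x > 0\<close> by (simp add: field_simps)
    ultimately show ?thesis
      by (simp add: power2_eq_square divide_simps; simp add: algebra_simps)
  qed
  ultimately have "((\<lambda>x. x ^ m * (- ln x)) has_integral (F 1 - F 0)) {0..1}"
    by (intro fundamental_theorem_of_calculus_interior)
       (auto simp: has_real_derivative_iff_has_vector_derivative[symmetric])
  then show ?thesis
    by (simp add: F_def)
qed

lemma catalan_G_pairs_sums:
  "(\<lambda>j. 1 / real (4 * j + 1) ^ 2 - 1 / real (4 * j + 3) ^ 2) sums catalan_G"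
proof -
  let ?f = "\<lambda>k::nat. (-1) ^ k / (2 * real k + 1) ^ 2 :: real"
  have "summable (\<lambda>k. norm (?f k))"
  proof (rule summable_comparison_test')
    show "summable (\<lambda>k. 1 / real (Suc k) ^ 2)"
      using summable_Suc_iff[of "\<lambda>k. 1 / real k ^ 2"] inverse_power_summable[of 2, where 'a=real]
      by (simp add: divide_inverse)
    show "norm (norm (?f k)) \<le> 1 / real (Suc k) ^ 2" for k
    proof -
      have "real (Suc k) ^ 2 \<le> (2 * real k + 1) ^ 2"
        by (intro power_mono) auto
      then show ?thesis
        by (simp add: power_abs divide_simps)
    qed
  qed
  then have "?f sums catalan_G"
    unfolding catalan_G_def by (rule summable_sums[OF summable_norm_cancel])
  then have "(\<lambda>j. \<Sum>k\<in>{j * 2..<j * 2 + 2}. ?f k) sums catalan_G"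
    by (rule sums_group) simp
  moreover have "(\<Sum>k\<in>{j * 2..<j * 2 + 2}. ?f k) = 1 / real (4 * j + 1) ^ 2 - 1 / real (4 * j + 3) ^ 2" for j
  proof -
    have "{j * 2..<j * 2 + 2} = {2 * j, 2 * j + 1}"
      by auto
    moreover have "(-1 :: real) ^ (2 * j) = 1" "(-1 :: real) ^ (2 * j + 1) = -1"
      by simp_all
    moreover have "2 * real (2 * j) + 1 = real (4 * j + 1)" "2 * real (2 * j + 1) + 1 = real (4 * j + 3)"
      by simp_all
    ultimately show ?thesis
      by (simp only:) (simp add: algebra_simps)
  qed
  ultimately show ?thesis
    by simp
qed

lemma power_diff_mult_neg_ln_sums:
  assumes "x \<in> {0..1::real}"
  shows "(\<lambda>j. (x ^ (4 * j) - x ^ (4 * j + 2)) * (- ln x)) sums (- ln x / (1 + x\<^sup>2))"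
proof (cases "x = 1")
  case False
  with assms have "x ^ 4 < 1" "x\<^sup>2 < 1"
    by (simp_all add: power_less_one_iff)
  then have "(\<lambda>j. (x ^ 4) ^ j * ((1 - x\<^sup>2) * (- ln x))) sums (1 / (1 - x ^ 4) * ((1 - x\<^sup>2) * (- ln x)))"
    using assms by (intro sums_mult2 geometric_sums) simp
  moreover have "(\<lambda>j. (x ^ 4) ^ j * ((1 - x\<^sup>2) * (- ln x))) = (\<lambda>j. (x ^ (4 * j) - x ^ (4 * j + 2)) * (- ln x))"
    by (simp only: power_mult[symmetric] power_add) (simp add: algebra_simps)
  moreover have "1 / (1 - x ^ 4) * ((1 - x\<^sup>2) * (- ln x)) = - ln x / (1 + x\<^sup>2)"
  proof -
    have "1 - x ^ 4 = (1 - x\<^sup>2) * (1 + x\<^sup>2)"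
      by (simp add: algebra_simps power2_eq_square power4_eq_xxxx)
    moreover have "1 - x\<^sup>2 \<noteq> 0" "1 + x\<^sup>2 \<noteq> 0"
      using \<open>x\<^sup>2 < 1\<close> zero_le_power2[of x] by linarith+
    ultimately show ?thesis
      by simp
  qed
  ultimately show ?thesis
    by (simp only:)
qed simp

lemma has_integral_catalan:
  "((\<lambda>x. - ln x / (1 + x\<^sup>2)) has_integral catalan_G) {0..1}"
proof -
  let ?f = "\<lambda>j x::real. (x ^ (4 * j) - x ^ (4 * j + 2)) * (- ln x)"
  have int: "(?f j has_integral 1 / real (4 * j + 1) ^ 2 - 1 / real (4 * j + 3) ^ 2) {0..1}" for j
    using has_integral_diff[OF has_integral_power_mult_neg_ln[of "4 * j"]
        has_integral_power_mult_neg_ln[of "4 * j + 2"]]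
    by (simp add: algebra_simps)
  have nonneg: "0 \<le> ?f j x" if "x \<in> {0..1}" for j x
  proof -
    have "x ^ (4 * j + 2) \<le> x ^ (4 * j)"
      by (rule power_decreasing) (use that in auto)
    moreover have "0 \<le> - ln x"
      using that by (cases "x = 0") auto
    ultimately show ?thesis
      by (intro mult_nonneg_nonneg) simp_all
  qed
  from has_integral_suminf_nonneg[OF nonneg int power_diff_mult_neg_ln_sums
      sums_summable[OF catalan_G_pairs_sums]]
  show ?thesis
    by (simp only: catalan_G_pairs_sums[THEN sums_unique, symmetric])
qed

lemma arctan_image_0_1: "arctan ` {0..1} = {0..pi/4}"
proof
  show "arctan ` {0..1} \<subseteq> {0..pi/4}"
    using arctan_le_iff[of 0] arctan_le_iff[of _ 1] by (auto simp: arctan_one)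
  show "{0..pi/4} \<subseteq> arctan ` {0..1}"
  proof
    fix v :: real
    assume "v \<in> {0..pi/4}"
    then have "0 \<le> v" "v \<le> pi/4"
      by auto
    then have "v < pi/2"
      using pi_gt_zero by linarith
    have "tan 0 \<le> tan v" "tan v \<le> tan (pi/4)"
      using \<open>0 \<le> v\<close> \<open>v \<le> pi/4\<close> \<open>v < pi/2\<close> pi_gt_zero by (intro tan_mono_le; linarith)+
    then have "tan v \<in> {0..1}"
      by (simp add: tan_45)
    moreover have "arctan (tan v) = v"
      using \<open>0 \<le> v\<close> \<open>v < pi/2\<close> pi_gt_zero by (intro arctan_tan) auto
    ultimately show "v \<in> arctan ` {0..1}"
      by (metis image_eqI)
  qed
qed

lemma has_integral_neg_ln_tan:
  "((\<lambda>v. - ln (tan v)) has_integral catalan_G) {0..pi/4}"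
proof -
  have catalan: "(\<lambda>x. \<bar>inverse (1 + x\<^sup>2)\<bar> * - ln (tan (arctan x))) absolutely_integrable_on {0..1}
      \<and> integral {0..1} (\<lambda>x. \<bar>inverse (1 + x\<^sup>2)\<bar> * - ln (tan (arctan x))) = catalan_G"
  proof -
    have "0 \<le> - ln x / (1 + x\<^sup>2)" if "x \<in> {0..1}" for x :: real
      using that by (cases "x = 0") (auto intro!: divide_nonpos_pos add_pos_nonneg)
    then have "(\<lambda>x. - ln x / (1 + x\<^sup>2)) absolutely_integrable_on {0..1::real}"
      by (rule nonnegative_absolutely_integrable_1[OF has_integral_integrable[OF has_integral_catalan]])
    moreover have "integral {0..1::real} (\<lambda>x. - ln x / (1 + x\<^sup>2)) = catalan_G"
      using has_integral_catalan by (rule integral_unique)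
    moreover have "(\<lambda>x. \<bar>inverse (1 + x\<^sup>2)\<bar> * - ln (tan (arctan x))) = (\<lambda>x::real. - ln x / (1 + x\<^sup>2))"
      by (simp add: tan_arctan divide_inverse mult.commute)
    ultimately show ?thesis
      by simp
  qed
  have "(\<lambda>x. \<bar>inverse (1 + x\<^sup>2)\<bar> * - ln (tan (arctan x))) absolutely_integrable_on {0..1}
      \<and> integral {0..1} (\<lambda>x. \<bar>inverse (1 + x\<^sup>2)\<bar> * - ln (tan (arctan x))) = catalan_G
    \<longleftrightarrow> (\<lambda>v. - ln (tan v)) absolutely_integrable_on arctan ` {0..1}
      \<and> integral (arctan ` {0..1}) (\<lambda>v. - ln (tan v)) = catalan_G"
    by (rule has_absolute_integral_change_of_variables_1')
       (auto simp: inj_on_def arctan_eq_iff intro: DERIV_arctan[THEN has_field_derivative_at_within])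
  with catalan have "(\<lambda>v. - ln (tan v)) absolutely_integrable_on {0..pi/4}
      \<and> integral {0..pi/4} (\<lambda>v. - ln (tan v)) = catalan_G"
    unfolding arctan_image_0_1 by blast
  then show ?thesis
    by (simp add: absolutely_integrable_on_def has_integral_integrable_integral)
qed

lemma cos_gt_zero_quarter:
  assumes "0 \<le> v" "v \<le> pi/4"
  shows "0 < cos v"
  using assms pi_gt_zero by (intro cos_gt_zero_pi) linarith+

lemma sin_gt_zero_quarter:
  assumes "0 < v" "v \<le> pi/4"
  shows "0 < sin v"
  using assms pi_gt_zero by (intro sin_gt_zero) linarith+

lemma has_integral_neg_ln_sin_lower:
  assumes "((\<lambda>v. - ln (cos v)) has_integral b) {0..pi/4}"
  shows "((\<lambda>v. - ln (sin v)) has_integral catalan_G + b) {0..pi/4}"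
proof (rule has_integral_spike_finite)
  show "((\<lambda>v. - ln (tan v) + - ln (cos v)) has_integral catalan_G + b) {0..pi/4}"
    by (rule has_integral_add[OF has_integral_neg_ln_tan assms])
  show "- ln (sin v) = - ln (tan v) + - ln (cos v)" if "v \<in> {0..pi/4} - {0}" for v
    using that sin_gt_zero_quarter[of v] cos_gt_zero_quarter[of v] by (simp add: tan_def ln_div)
qed simp

lemma has_integral_neg_ln_sin_upper:
  assumes "((\<lambda>v. - ln (cos v)) has_integral b) {0..pi/4}"
  shows "((\<lambda>w. - ln (sin w)) has_integral b) {pi/4..pi/2}"
proof -
  have "((\<lambda>x. - ln (cos x)) has_integral b) {- (pi/4)..0}"
    using has_integral_reflect_real[THEN iffD2, OF assms] by (simp only: cos_minus minus_zero)
  then have "(((\<lambda>w. - ln (sin w)) \<circ> (+) (pi/2)) has_integral b) {- (pi/4)..0}"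
    by (simp add: o_def sin_add)
  then show ?thesis
    by (simp add: has_integral_shift_Icc_real)
qed

lemma has_integral_neg_ln_cos:
  "((\<lambda>v. - ln (cos v)) has_integral (pi/4 * ln 2 - catalan_G / 2)) {0..pi/4}"
proof -
  define b where "b = integral {0..pi/4} (\<lambda>v. - ln (cos v))"
  have "\<forall>v\<in>{0..pi/4}. cos v \<noteq> 0"
    using cos_gt_zero_quarter by force
  then have "continuous_on {0..pi/4} (\<lambda>v. - ln (cos v))"
    by (intro continuous_intros) auto
  then have cos_int: "((\<lambda>v. - ln (cos v)) has_integral b) {0..pi/4}"
    unfolding b_def by (intro integrable_integral integrable_continuous_interval)
  have sin_lower: "((\<lambda>v. - ln (sin v)) has_integral catalan_G + b) {0..pi/4}"
    using cos_int by (rule has_integral_neg_ln_sin_lower)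
  (* Integrate - ln (sin (2 * v)) over [0, pi/4] in two ways: by the substitution w = 2 * v,
     and by the duplication formula sin (2 * v) = 2 * sin v * cos v. *)
  have "((\<lambda>w. - ln (sin w)) has_integral (catalan_G + b) + b) {0..pi/2}"
    using pi_gt_zero
    by (intro has_integral_combine[OF _ _ sin_lower has_integral_neg_ln_sin_upper[OF cos_int]]) simp_all
  then have "((\<lambda>w. - ln (sin w)) has_integral catalan_G + 2 * b) (cbox 0 (pi/2))"
    by (simp add: algebra_simps)
  from has_integral_affinity'[OF this, of 2 0]
  have by_substitution: "((\<lambda>v. - ln (sin (2 * v))) has_integral (catalan_G + 2 * b) / 2) {0..pi/4}"
    by simp
  have const: "((\<lambda>v. ln 2) has_integral pi/4 * ln 2) {0..pi/4}"
    using has_integral_const_real[of "ln 2 :: real" 0 "pi/4"] by (simp add: mult.commute)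
  have "((\<lambda>v. - ln (sin (2 * v))) has_integral (catalan_G + b) + b - pi/4 * ln 2) {0..pi/4}"
  proof (rule has_integral_spike_finite)
    show "((\<lambda>v. - ln (sin v) + - ln (cos v) - ln 2) has_integral (catalan_G + b) + b - pi/4 * ln 2) {0..pi/4}"
      by (intro has_integral_diff has_integral_add sin_lower cos_int const)
    show "- ln (sin (2 * v)) = - ln (sin v) + - ln (cos v) - ln 2" if "v \<in> {0..pi/4} - {0}" for v
      using that sin_gt_zero_quarter[of v] cos_gt_zero_quarter[of v] by (simp add: sin_double ln_mult)
  qed simp
  with by_substitution have "(catalan_G + 2 * b) / 2 = (catalan_G + b) + b - pi/4 * ln 2"
    by (rule has_integral_unique)
  then have "b = pi/4 * ln 2 - catalan_G / 2"
    by (simp add: field_simps)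
  with cos_int show ?thesis
    by simp
qed

lemma has_integral_log_one_plus_cos:
  "((\<lambda>t. 2 * ln 2 - 2 * ln (1 + cos t)) has_integral (2 * pi * ln 2 - 4 * catalan_G)) {0..pi/2}"
proof -
  have "((\<lambda>v. - ln (cos v)) has_integral (pi/4 * ln 2 - catalan_G / 2)) (cbox 0 (pi/4))"
    using has_integral_neg_ln_cos by simp
  from has_integral_affinity'[OF this, of "1/2" 0]
  have "((\<lambda>t. - ln (cos (t / 2))) has_integral 2 * (pi/4 * ln 2 - catalan_G / 2)) {0..pi/2}"
    by simp
  from has_integral_mult_right[OF this, of 4]
  have "((\<lambda>t. 4 * - ln (cos (t / 2))) has_integral (2 * pi * ln 2 - 4 * catalan_G)) {0..pi/2}"
    by (simp add: algebra_simps)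
  moreover have "4 * - ln (cos (t / 2)) = 2 * ln 2 - 2 * ln (1 + cos t)" if "t \<in> {0..pi/2}" for t
  proof -
    from that have "0 < cos (t / 2)"
      by (intro cos_gt_zero_quarter) auto
    moreover have "1 + cos t = 2 * cos (t / 2) ^ 2"
      using cos_double_cos[of "t / 2"] by simp
    ultimately show ?thesis
      by (simp add: ln_mult ln_realpow)
  qed
  ultimately show ?thesis
    by (rule has_integral_eq[rotated])
qed

lemma central_binom_norm_sq_div_sums:
  "(\<lambda>k. central_binom_norm (Suc k) ^ 2 / real (Suc k)) sums (4 * ln 2 - 8 * catalan_G / pi)"
proof -
  have "(\<lambda>k. pi / 2 * (central_binom_norm (Suc k) ^ 2 / real (Suc k))) sums (2 * pi * ln 2 - 4 * catalan_G)"
  proof (rule has_integral_sums_nonneg)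
    show "0 \<le> central_binom_norm (Suc k) * (sin t ^ 2) ^ Suc k / real (Suc k)" for k t
      using central_binom_norm_pos[of "Suc k"] by simp
    show "((\<lambda>t. central_binom_norm (Suc k) * (sin t ^ 2) ^ Suc k / real (Suc k)) has_integral
            pi / 2 * (central_binom_norm (Suc k) ^ 2 / real (Suc k))) {0<..<pi/2}" for k
      using has_integral_mult_left[OF has_integral_sin_power_even[of "Suc k"], of "central_binom_norm (Suc k) / real (Suc k)"]
      unfolding power_mult by (simp add: has_integral_Icc_iff_Ioo[symmetric] mult_ac power2_eq_square)
    show "(\<lambda>k. central_binom_norm (Suc k) * (sin t ^ 2) ^ Suc k / real (Suc k)) sums (2 * ln 2 - 2 * ln (1 + cos t))"
      if "t \<in> {0<..<pi/2}" for t
    proof -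
      from that have "0 < cos t"
        by (intro cos_gt_zero_pi) auto
      then have "sin t ^ 2 < 1" "sqrt (1 - sin t ^ 2) = cos t"
        by (simp_all add: sin_squared_eq)
      then show ?thesis
        using central_binom_norm_power_div_sums[of "sin t ^ 2"] by simp
    qed
    show "((\<lambda>t. 2 * ln 2 - 2 * ln (1 + cos t)) has_integral 2 * pi * ln 2 - 4 * catalan_G) {0<..<pi/2}"
      using has_integral_log_one_plus_cos by (simp add: has_integral_Icc_iff_Ioo)
  qed
  from sums_mult[OF this, of "2 / pi"]
  have "(\<lambda>k. 2 / pi * (pi / 2 * (central_binom_norm (Suc k) ^ 2 / real (Suc k))))
      sums (2 / pi * (2 * pi * ln 2 - 4 * catalan_G))" .
  moreover have "2 / pi * (pi / 2 * x) = x" for x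
    by simp
  moreover have "2 / pi * (2 * pi * ln 2 - 4 * catalan_G) = 4 * ln 2 - 8 * catalan_G / pi"
    by (simp add: field_simps)
  ultimately show ?thesis
    by (simp only:)
qed

theorem corollaryB10:
  shows "(\<lambda>m. let n = Suc m in central_binom_norm n ^ 2 * harm3 n / (2 * real n - 1))
     sums ((2 / pi) * (16 * catalan_G + 4 * pi - 8 * pi * ln 2 - zeta3 - 8))"
proof -
  have "(\<lambda>k. wallis_seq k / real (Suc k) ^ 3) sums (8 * (1 - 2 / pi) - 4 * (4 * ln 2 - 8 * catalan_G / pi))"
    unfolding wallis_seq_div_cube
    by (intro sums_diff sums_mult central_binom_norm_sq_div_odd_sums central_binom_norm_sq_div_sums)
  then have "(\<lambda>N. (\<Sum>k<N. wallis_seq k / real (Suc k) ^ 3) - wallis_seq N * harm3 N)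
      \<longlonglongrightarrow> 8 * (1 - 2 / pi) - 4 * (4 * ln 2 - 8 * catalan_G / pi) - 2 / pi * zeta3"
    unfolding sums_def by (intro tendsto_intros wallis_seq_LIMSEQ harm3_LIMSEQ)
  moreover have "8 * (1 - 2 / pi) - 4 * (4 * ln 2 - 8 * catalan_G / pi) - 2 / pi * zeta3
      = (2 / pi) * (16 * catalan_G + 4 * pi - 8 * pi * ln 2 - zeta3 - 8)"
    by (simp add: field_simps)
  ultimately show ?thesis
    unfolding sums_def Let_def sum_central_binom_norm_sq_harm3 by simp
qed

end
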